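(* In the single-client model described in the context with fixed memory capacity $k$, as the number $N$ of observed test samples tends to infinity, every memory element converges in probability to the corresponding point $m^*_y$, where $m_0^*=-\mu-w_{\mathrm{pre}}$ and $m_1^*=\mu+w_{\mathrm{pre}}$; that is, for each $y\in\{0,1\}$ and every $\rho>0$, the probability that $M_y$ contains $k$ elements and each element $m_{y,\kappa}$, $\kappa=1,\dots,k$, satisfies $\|m_{y,\kappa}-m^*_y\|_2\le\rho$ tends to $1$ as $N\to\infty$.
   Context: Fix $d\ge 1$, $\mu\in\mathbb{R}^d$, $w_{\mathrm{pre}}\in\mathbb{R}^d$ with $\|w_{\mathrm{pre}}\|_2=1$, $b_{\mathrm{pre}}\in\mathbb{R}$, $t>0$. Data: label $y$ uniform on $\{0,1\}$; given $y$, embedding $f$ uniform on the closed unit ball centered at $(2y-1)\mu$. Initial classifier $z(f)=f^\top w_{\mathrm{pre}}+b_{\mathrm{pre}}$, $\hat p_1=1/(1+e^{-tz(f)})$, $\hat p_0=1-\hat p_1$, $\hat y(f)=\mathbf 1\{z(f)>0\}$, entropy $H(f)=-\hat p_1\log\hat p_1-\hat p_0\log\hat p_0$. Assumption: the error rate $\epsilon_{\mathrm{pre}}=\Pr(\hat y(f)\ne y)<1/2$, equivalently $\mu^\top w_{\mathrm{pre}}>0$ and $-\mu^\top w_{\mathrm{pre}}-1<b_{\mathrm{pre}}<\mu^\top w_{\mathrm{pre}}+1$. The client observes i.i.d. embeddings $f_1,\dots,f_N$; for $y\in\{0,1\}$ the memory $M_y=\{m_{y,1},\dots\}$ consists of the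 (at most) $k$ observed embeddings with $\hat y=y$ having the smallest entropy. *)

theory Defs
  imports "HOL-Probability.Probability"
begin

text \<open>Labels y in {0,1} are encoded as bool (True = 1, False = 0).\<close>

definition center :: "'a::euclidean_space \<Rightarrow> bool \<Rightarrow> 'a" where
  "center \<mu> y = (if y then \<mu> else - \<mu>)"

definition data_dist :: "'a::euclidean_space \<Rightarrow> (bool \<times> 'a) measure" where
  "data_dist \<mu> = measure_pmf (bernoulli_pmf (1/2)) \<bind>
     (\<lambda>y. distr (uniform_measure lborel (cball (center \<mu> y) 1))
                 (count_space UNIV \<Otimes>\<^sub>M borel) (\<lambda>f. (y, f)))"

definition logit :: "'a::euclidean_space \<Rightarrow> real \<Rightarrow> 'a \<Rightarrow> real" where
  "logit w b f = f \<bullet> w + b"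

definition phat1 :: "real \<Rightarrow> 'a::euclidean_space \<Rightarrow> real \<Rightarrow> 'a \<Rightarrow> real" where
  "phat1 t w b f = 1 / (1 + exp (- t * logit w b f))"

definition yhat :: "'a::euclidean_space \<Rightarrow> real \<Rightarrow> 'a \<Rightarrow> bool" where
  "yhat w b f = (logit w b f > 0)"

definition entropy :: "real \<Rightarrow> 'a::euclidean_space \<Rightarrow> real \<Rightarrow> 'a \<Rightarrow> real" where
  "entropy t w b f = (let p1 = phat1 t w b f; p0 = 1 - p1 in - p1 * ln p1 - p0 * ln p0)"

text \<open>Memory M_y built from observations f_0,...,f_{N-1}: the (at most) k indices i with
  predicted label y having smallest entropy; ties (a null event) are broken by index.
  Represented as a set of sample indices.\<close>
definition memory :: "real \<Rightarrow> 'a::euclidean_space \<Rightarrow> real \<Rightarrow> nat \<Rightarrow> nat \<Rightarrow> bool \<Rightarrow> (nat \<Rightarrow> 'a) \<Rightarrow> nat set" where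
  "memory t w b k N y fs =
     {i. i < N \<and> yhat w b (fs i) = y \<and>
         card {j. j < N \<and> yhat w b (fs j) = y \<and>
                  (entropy t w b (fs j) < entropy t w b (fs i) \<or>
                   (entropy t w b (fs j) = entropy t w b (fs i) \<and> j < i))} < k}"

definition mstar :: "'a::euclidean_space \<Rightarrow> 'a \<Rightarrow> bool \<Rightarrow> 'a" where
  "mstar \<mu> w y = (if y then \<mu> + w else - \<mu> - w)"

end

theory Submission
  imports Defs "HOL-Analysis.Ball_Volume"
begin

(* The entropy of a sample is a strictly decreasing function of the absolute logit |z(f)|, so the
   memory M_y consists of the (at most) k samples predicted as y with the largest |z(f)|.  For a
   threshold theta slightly below the maximum of the signed logit on the ball around (2y-1) mu, the
   confident set {f. yhat f = y, |z(f)| > theta} is a thin cap of that ball at its pole m*_y: it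
   lies within rho of m*_y, misses the other ball, and has some probability p > 0.  As soon as k
   samples are confident the memory consists of confident samples only, and splitting the sample
   into k blocks of length N div k shows that this fails with probability at most
   k (1 - p)^(N div k), which tends to 0. *)

definition bin_entropy :: "real \<Rightarrow> real" where
  "bin_entropy p = - p * ln p - (1 - p) * ln (1 - p)"

lemma bin_entropy_one_minus: "bin_entropy (1 - p) = bin_entropy p"
  unfolding bin_entropy_def by (simp add: algebra_simps)

lemma bin_entropy_strict_antimono:
  assumes "1/2 \<le> p" "p < q" "q < 1"
  shows "bin_entropy q < bin_entropy p"
proof (rule DERIV_neg_imp_decreasing_open[OF \<open>p < q\<close>])
  fix x assume x: "p < x" "x < q"
  have "(bin_entropy has_real_derivative ln (1 - x) - ln x) (at x)"
    unfolding bin_entropy_def by (rule derivative_eq_intros refl | use x assms in force)+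
  moreover have "ln (1 - x) < ln x"
    using x assms by simp
  ultimately show "\<exists>d. (bin_entropy has_real_derivative d) (at x) \<and> d < 0"
    by auto
next
  show "continuous_on {p..q} bin_entropy"
    using assms unfolding bin_entropy_def by (intro continuous_intros) auto
qed

lemma entropy_eq_bin_entropy: "entropy t w b f = bin_entropy (phat1 t w b f)"
  by (simp add: entropy_def bin_entropy_def Let_def)

lemma entropy_eq_bin_entropy_abs_logit:
  "entropy t w b f = bin_entropy (1 / (1 + exp (- t * \<bar>logit w b f\<bar>)))"
proof (cases "0 \<le> logit w b f")
  case True
  then show ?thesis
    by (simp add: entropy_eq_bin_entropy phat1_def)
next
  case False
  have "phat1 t w b f = 1 - 1 / (1 + exp (- t * \<bar>logit w b f\<bar>))"
    using False
    by (simp add: phat1_def exp_minus add_pos_pos add_divide_distrib[symmetric]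
        add_nonneg_eq_0_iff field_simps)
  then show ?thesis
    by (simp add: entropy_eq_bin_entropy bin_entropy_one_minus)
qed

lemma entropy_less_if_abs_logit_less:
  assumes "0 < t" "\<bar>logit w b g\<bar> < \<bar>logit w b f\<bar>"
  shows "entropy t w b f < entropy t w b g"
proof -
  define \<sigma> where "\<sigma> z = 1 / (1 + exp (- t * z))" for z
  have "\<sigma> \<bar>logit w b g\<bar> < \<sigma> \<bar>logit w b f\<bar>"
    using assms by (simp add: \<sigma>_def divide_simps add_pos_pos)
  moreover have "1/2 \<le> \<sigma> \<bar>logit w b g\<bar>" "\<sigma> \<bar>logit w b f\<bar> < 1"
    using \<open>0 < t\<close> by (simp_all add: \<sigma>_def divide_simps add_pos_pos)
  ultimately show ?thesis
    unfolding entropy_eq_bin_entropy_abs_logit \<sigma>_def[symmetric]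
    by (intro bin_entropy_strict_antimono)
qed

lemma card_rank_less:
  fixes P :: "'b set" and R :: "'b \<Rightarrow> 'b \<Rightarrow> bool"
  assumes fin: "finite P" and irrefl: "\<And>i. \<not> R i i"
    and trans: "\<And>i j l. R i j \<Longrightarrow> R j l \<Longrightarrow> R i l"
    and total: "\<And>i j. i \<in> P \<Longrightarrow> j \<in> P \<Longrightarrow> i \<noteq> j \<Longrightarrow> R i j \<or> R j i"
    and "k \<le> card P"
  shows "card {i\<in>P. card {j\<in>P. R j i} < k} = k"
proof -
  define rank where "rank i = card {j\<in>P. R j i}" for i
  have rank_less: "rank i < rank j" if "R i j" "i \<in> P" for i j
  proof -
    have "{l\<in>P. R l i} \<subset> {l\<in>P. R l j}"
      using that irrefl trans by blast
    then show ?thesis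
      unfolding rank_def using fin by (intro psubset_card_mono) auto
  qed
  have inj: "inj_on rank P"
    by (intro inj_onI) (metis rank_less total less_irrefl)
  have "rank ` P \<subseteq> {..<card P}"
  proof
    fix x assume "x \<in> rank ` P"
    then obtain i where "i \<in> P" "x = rank i" by auto
    moreover have "{j\<in>P. R j i} \<subset> P"
      using \<open>i \<in> P\<close> irrefl by blast
    ultimately show "x \<in> {..<card P}"
      using fin unfolding rank_def by (auto intro: psubset_card_mono)
  qed
  then have "rank ` P = {..<card P}"
    using card_image[OF inj] by (intro card_subset_eq) auto
  then have "rank ` {i\<in>P. rank i < k} = {..<k}"
    using \<open>k \<le> card P\<close> by (auto simp: image_iff)
  moreover have "card (rank ` {i\<in>P. rank i < k}) = card {i\<in>P. rank i < k}"
    by (rule card_image) (rule inj_on_subset[OF inj], auto)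
  ultimately show ?thesis
    unfolding rank_def by simp
qed

lemma card_memory:
  assumes "k \<le> card {i. i < N \<and> yhat w b (fs i) = y}"
  shows "card (memory t w b k N y fs) = k"
proof -
  let ?P = "{i. i < N \<and> yhat w b (fs i) = y}"
  let ?e = "\<lambda>i. entropy t w b (fs i)"
  have "memory t w b k N y fs =
      {i\<in>?P. card {j\<in>?P. ?e j < ?e i \<or> (?e j = ?e i \<and> j < i)} < k}"
    unfolding memory_def by (simp add: conj_assoc)
  also have "card \<dots> = k"
    using assms
    by (intro card_rank_less[of ?P "\<lambda>j i. ?e j < ?e i \<or> (?e j = ?e i \<and> j < i)"])
       (auto simp: not_less_iff_gr_or_eq)
  finally show ?thesis .
qed

definition confident :: "'a::euclidean_space \<Rightarrow> real \<Rightarrow> bool \<Rightarrow> real \<Rightarrow> 'a set" where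
  "confident w b y \<theta> = {f. yhat w b f = y \<and> \<theta> < \<bar>logit w b f\<bar>}"

lemma memory_subset_confident:
  assumes "0 < t" and "k \<le> card {i. i < N \<and> fs i \<in> confident w b y \<theta>}"
  shows "memory t w b k N y fs \<subseteq> {i. fs i \<in> confident w b y \<theta>}"
proof
  fix i assume i: "i \<in> memory t w b k N y fs"
  let ?e = "\<lambda>j. entropy t w b (fs j)"
  let ?C = "{j. j < N \<and> fs j \<in> confident w b y \<theta>}"
  let ?before = "{j. j < N \<and> yhat w b (fs j) = y \<and> (?e j < ?e i \<or> ?e j = ?e i \<and> j < i)}"
  have yi: "yhat w b (fs i) = y" and "card ?before < k"
    using i by (auto simp: memory_def)
  show "i \<in> {i. fs i \<in> confident w b y \<theta>}"
  proof (rule ccontr)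
    assume "i \<notin> {i. fs i \<in> confident w b y \<theta>}"
    then have "\<bar>logit w b (fs i)\<bar> \<le> \<theta>"
      using yi by (auto simp: confident_def)
    then have "?C \<subseteq> ?before"
      using entropy_less_if_abs_logit_less[OF \<open>0 < t\<close>] by (force simp: confident_def)
    then have "card ?C \<le> card ?before"
      by (intro card_mono) auto
    then show False
      using assms(2) \<open>card ?before < k\<close> by linarith
  qed
qed

lemma memory_near_if_many_confident:
  assumes "0 < t" and "k \<le> card {i. i < N \<and> fs i \<in> confident w b y \<theta>}"
    and "\<And>i. i < N \<Longrightarrow> fs i \<in> confident w b y \<theta> \<Longrightarrow> norm (fs i - m) \<le> \<rho>"
  shows "card (memory t w b k N y fs) = k \<and> (\<forall>i \<in> memory t w b k N y fs. norm (fs i - m) \<le> \<rho>)"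
proof
  have "k \<le> card {i. i < N \<and> yhat w b (fs i) = y}"
    using assms(2) by (rule order_trans) (auto intro!: card_mono simp: confident_def)
  then show "card (memory t w b k N y fs) = k"
    by (rule card_memory)
  show "\<forall>i \<in> memory t w b k N y fs. norm (fs i - m) \<le> \<rho>"
    using memory_subset_confident[OF assms(1,2)] assms(3) by (force simp: memory_def)
qed

lemma confident_borel [measurable]: "confident w b y \<theta> \<in> sets borel"
  unfolding confident_def yhat_def logit_def by measurable

lemma confident_eq_halfspace:
  assumes "0 \<le> \<theta>"
  shows "confident w b y \<theta> = {f. \<theta> - (if y then b else - b) < f \<bullet> center w y}"
  using assms by (cases y) (auto simp: confident_def yhat_def logit_def center_def)

lemma inner_le_of_mem_cball:
  fixes c f v :: "'a::real_inner"
  assumes "norm v = 1" "f \<in> cball c r"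
  shows "f \<bullet> v \<le> c \<bullet> v + r"
proof -
  have "(f - c) \<bullet> v \<le> norm (f - c) * norm v"
    by (rule norm_cauchy_schwarz)
  also have "\<dots> \<le> r"
    using assms by (simp add: dist_norm norm_minus_commute)
  finally show ?thesis
    by (simp add: inner_diff_left)
qed

lemma norm_diff_pole_le_of_mem_cap:
  fixes c f v :: "'a::real_inner"
  assumes "norm v = 1" "f \<in> cball c 1" "c \<bullet> v + 1 - \<delta> < f \<bullet> v" "2 * \<delta> \<le> \<rho>\<^sup>2" "0 \<le> \<rho>"
  shows "norm (f - (c + v)) \<le> \<rho>"
proof (rule power2_le_imp_le[OF _ \<open>0 \<le> \<rho>\<close>])
  have "v \<bullet> v = 1"
    using assms(1) by (metis norm_eq_1)
  then have "(norm (f - (c + v)))\<^sup>2 = (norm (f - c))\<^sup>2 - 2 * ((f - c) \<bullet> v) + 1"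
    by (simp add: power2_norm_eq_inner algebra_simps inner_commute)
  moreover have "(norm (f - c))\<^sup>2 \<le> 1"
    using assms(2) by (simp add: dist_norm norm_minus_commute power_le_one)
  ultimately show "(norm (f - (c + v)))\<^sup>2 \<le> \<rho>\<^sup>2"
    using assms(3,4) by (simp add: inner_diff_left)
qed

lemma emeasure_cball_cap_pos:
  fixes c v :: "'a::euclidean_space"
  assumes "norm v = 1" "0 < \<delta>"
  shows "0 < emeasure lborel (cball c 1 \<inter> {f. c \<bullet> v + 1 - \<delta> < f \<bullet> v})"
proof -
  define s where "s = min 1 (\<delta> / 2)"
  define q where "q = c + (1 - s) *\<^sub>R v"
  have s: "0 < s" "s \<le> 1" "3 * s \<le> 2 * \<delta>"
    using assms by (auto simp: s_def)
  have "ball q (s / 2) \<subseteq> cball c 1 \<inter> {f. c \<bullet> v + 1 - \<delta> < f \<bullet> v}"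
  proof
    fix x assume "x \<in> ball q (s / 2)"
    then have x: "norm (x - q) < s / 2"
      by (simp add: dist_norm norm_minus_commute)
    have "norm (x - c) \<le> norm (x - q) + norm (q - c)"
      using norm_triangle_ineq[of "x - q" "q - c"] by simp
    also have "norm (q - c) = 1 - s"
      using assms s by (simp add: q_def)
    finally have "x \<in> cball c 1"
      using x s by (simp add: dist_norm norm_minus_commute)
    moreover have "(q - x) \<bullet> v \<le> norm (q - x) * norm v"
      by (rule norm_cauchy_schwarz)
    then have "(q - x) \<bullet> v < s / 2"
      using x assms(1) by (simp add: norm_minus_commute)
    moreover have "q \<bullet> v = c \<bullet> v + (1 - s)"
      using assms(1) norm_eq_1[of v] by (simp add: q_def inner_add_left)
    ultimately show "x \<in> cball c 1 \<inter> {f. c \<bullet> v + 1 - \<delta> < f \<bullet> v}"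
      using s by (simp add: inner_diff_left)
  qed
  then have "emeasure lborel (ball q (s / 2)) \<le> emeasure lborel (cball c 1 \<inter> {f. c \<bullet> v + 1 - \<delta> < f \<bullet> v})"
    by (intro emeasure_mono) auto
  moreover have "0 < emeasure lborel (ball q (s / 2))"
    using s by (simp add: emeasure_ball)
  ultimately show ?thesis
    by order
qed

lemma inner_center_center [simp]: "center \<mu> y \<bullet> center w y = \<mu> \<bullet> w"
  by (simp add: center_def)

lemma norm_center [simp]: "norm (center w y) = norm w"
  by (simp add: center_def)

lemma mstar_eq_center_add: "mstar \<mu> w y = center \<mu> y + center w y"
  by (simp add: mstar_def center_def)

lemma norm_diff_mstar_le_of_mem_cap:
  fixes \<mu> w f :: "'a::euclidean_space"
  assumes "norm w = 1" "f \<in> cball (center \<mu> y') 1" "\<mu> \<bullet> w + 1 - \<delta> < f \<bullet> center w y"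
    and "\<delta> \<le> 2 * (\<mu> \<bullet> w)" "2 * \<delta> \<le> \<rho>\<^sup>2" "0 \<le> \<rho>"
  shows "norm (f - mstar \<mu> w y) \<le> \<rho>"
proof (cases "y' = y")
  case True
  then show ?thesis
    using assms norm_diff_pole_le_of_mem_cap[of "center w y" f "center \<mu> y" \<delta> \<rho>]
    by (simp add: mstar_eq_center_add)
next
  case False
  then have "f \<in> cball (- center \<mu> y) 1"
    using assms(2) by (cases y; cases y') (simp_all add: center_def)
  then have "f \<bullet> center w y \<le> 1 - \<mu> \<bullet> w"
    using inner_le_of_mem_cball[of "center w y"] assms(1) by fastforce
  then show ?thesis
    using assms(3,4) by simp
qed

definition cond_data_dist :: "'a::euclidean_space \<Rightarrow> bool \<Rightarrow> (bool \<times> 'a) measure" where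
  "cond_data_dist \<mu> y = distr (uniform_measure lborel (cball (center \<mu> y) 1))
     (count_space UNIV \<Otimes>\<^sub>M borel) (\<lambda>f. (y, f))"

lemma data_dist_eq_bind: "data_dist \<mu> = measure_pmf (bernoulli_pmf (1/2)) \<bind> cond_data_dist \<mu>"
  unfolding data_dist_def cond_data_dist_def ..

lemma sets_cond_data_dist [measurable_cong]:
  "sets (cond_data_dist \<mu> y) = sets (count_space UNIV \<Otimes>\<^sub>M borel)"
  by (simp add: cond_data_dist_def)

lemma emeasure_unit_cball_pos: "0 < emeasure lborel (cball (c::'a::euclidean_space) 1)"
  by (simp add: emeasure_cball)

lemma prob_space_cond_data_dist: "prob_space (cond_data_dist \<mu> y)"
  unfolding cond_data_dist_def
proof (rule prob_space.prob_space_distr)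
  show "prob_space (uniform_measure lborel (cball (center \<mu> y) 1))"
    using emeasure_unit_cball_pos[of "center \<mu> y"] emeasure_lborel_cball_finite[of "center \<mu> y" 1]
    by (intro prob_space_uniform_measure) auto
qed measurable

lemma emeasure_cond_data_dist_Times:
  assumes "X \<in> sets borel"
  shows "emeasure (cond_data_dist \<mu> y) (UNIV \<times> X) =
    emeasure lborel (cball (center \<mu> y) 1 \<inter> X) / emeasure lborel (cball (center \<mu> y) 1)"
  using assms by (simp add: cond_data_dist_def emeasure_distr emeasure_uniform_measure)

lemma sets_data_dist [measurable_cong]:
  "sets (data_dist \<mu>) = sets (count_space UNIV \<Otimes>\<^sub>M borel)"
  unfolding data_dist_eq_bind
  by (subst sets_bind[where N="count_space UNIV \<Otimes>\<^sub>M borel"]) (auto simp: sets_cond_data_dist)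

lemma prob_space_data_dist: "prob_space (data_dist \<mu>)"
  unfolding data_dist_eq_bind
  by (rule prob_space.prob_space_bind[where S="count_space UNIV \<Otimes>\<^sub>M borel"])
     (auto simp: prob_space_measure_pmf prob_space_cond_data_dist space_subprob_algebra
       sets_cond_data_dist prob_space_imp_subprob_space)

lemma emeasure_data_dist_Times:
  assumes "X \<in> sets borel"
  shows "emeasure (data_dist \<mu>) (UNIV \<times> X) =
    (emeasure (cond_data_dist \<mu> True) (UNIV \<times> X) + emeasure (cond_data_dist \<mu> False) (UNIV \<times> X)) / 2"
proof -
  have "emeasure (data_dist \<mu>) (UNIV \<times> X) =
      (\<integral>\<^sup>+y. emeasure (cond_data_dist \<mu> y) (UNIV \<times> X) \<partial>measure_pmf (bernoulli_pmf (1/2)))"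
    unfolding data_dist_eq_bind using assms
    by (intro emeasure_bind[where N="count_space UNIV \<Otimes>\<^sub>M borel"])
       (auto simp: space_subprob_algebra sets_cond_data_dist prob_space_cond_data_dist
         prob_space_imp_subprob_space)
  then show ?thesis
    by (simp add: nn_integral_bernoulli_pmf divide_ennreal_def distrib_right)
qed

lemma measure_data_dist_Times_eq_1:
  assumes "X \<in> sets borel" "\<And>y. cball (center \<mu> y) 1 \<subseteq> X"
  shows "measure (data_dist \<mu>) (UNIV \<times> X) = 1"
proof -
  have "emeasure (cond_data_dist \<mu> y) (UNIV \<times> X) = 1" for y
    using assms emeasure_unit_cball_pos[of "center \<mu> y"] emeasure_lborel_cball_finite[of "center \<mu> y" 1]
    by (simp add: emeasure_cond_data_dist_Times Int_absorb2)
  then have "emeasure (data_dist \<mu>) (UNIV \<times> X) = 1"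
    using assms(1) by (simp add: emeasure_data_dist_Times)
  then show ?thesis
    by (simp add: measure_def)
qed

lemma measure_data_dist_Times_pos:
  assumes "X \<in> sets borel" "0 < emeasure lborel (cball (center \<mu> y) 1 \<inter> X)"
  shows "0 < measure (data_dist \<mu>) (UNIV \<times> X)"
proof -
  interpret prob_space "data_dist \<mu>"
    by (rule prob_space_data_dist)
  have "0 < emeasure (cond_data_dist \<mu> y) (UNIV \<times> X)"
    using assms emeasure_lborel_cball_finite[of "center \<mu> y" 1]
    by (simp add: emeasure_cond_data_dist_Times ennreal_zero_less_divide)
  then have "0 < emeasure (data_dist \<mu>) (UNIV \<times> X)"
    using assms(1)
    by (cases y) (auto simp: emeasure_data_dist_Times ennreal_zero_less_divide
        intro: add_pos_nonneg add_nonneg_pos)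
  then show ?thesis
    by (simp add: emeasure_eq_measure)
qed

lemma sets_PiM_all_in:
  assumes "A \<in> sets D" "B \<subseteq> I" "finite B"
  shows "{\<omega> \<in> space (PiM I (\<lambda>_. D)). \<forall>i\<in>B. \<omega> i \<in> A} \<in> sets (PiM I (\<lambda>_. D))"
proof -
  have "{\<omega> \<in> space (PiM I (\<lambda>_. D)). \<forall>i\<in>B. \<omega> i \<in> A} = prod_emb I (\<lambda>_. D) B (PiE B (\<lambda>_. A))"
    using assms by (auto simp: prod_emb_def space_PiM PiE_iff extensional_def)
  then show ?thesis
    using assms by (simp add: sets_PiM_I)
qed

lemma measure_PiM_all_in:
  assumes "prob_space D" "A \<in> sets D" "B \<subseteq> I" "finite B"
  shows "measure (PiM I (\<lambda>_. D)) {\<omega> \<in> space (PiM I (\<lambda>_. D)). \<forall>i\<in>B. \<omega> i \<in> A} = measure D A ^ card B"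
proof -
  interpret D: prob_space D by fact
  interpret P: product_prob_space "\<lambda>_. D" I by unfold_locales
  have "emeasure (PiM I (\<lambda>_. D)) {\<omega> \<in> space (PiM I (\<lambda>_. D)). \<forall>i\<in>B. \<omega> i \<in> A} =
      ennreal (measure D A ^ card B)"
    using assms
    by (simp add: P.emeasure_PiM_Collect D.emeasure_eq_measure prod_ennreal ennreal_power)
  then show ?thesis
    by (simp add: P.emeasure_eq_measure)
qed

lemma block_subset_lessThan:
  fixes k m N r :: nat
  assumes "r < k" "k * m \<le> N"
  shows "{r * m..<(r + 1) * m} \<subseteq> {..<N}"
proof -
  have "(r + 1) * m \<le> k * m"
    using assms(1) by (intro mult_right_mono) auto
  then show ?thesis
    using assms(2) by auto
qed

lemma card_ge_if_blocks_hit: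
  fixes S :: "nat set"
  assumes "k * m \<le> N" and hit: "\<And>r. r < k \<Longrightarrow> \<exists>i\<in>{r * m..<(r + 1) * m}. i \<in> S"
  shows "k \<le> card {i. i < N \<and> i \<in> S}"
proof -
  obtain g where g: "\<And>r. r < k \<Longrightarrow> g r \<in> {r * m..<(r + 1) * m} \<and> g r \<in> S"
    using hit by metis
  have "inj_on g {..<k}"
  proof (rule inj_on_inverseI)
    fix r assume "r \<in> {..<k}"
    then show "g r div m = r"
      using g[of r] by (intro div_nat_eqI) (auto simp: mult.commute)
  qed
  moreover have "g ` {..<k} \<subseteq> {i. i < N \<and> i \<in> S}"
  proof clarify
    fix r assume "r < k"
    then show "g r < N \<and> g r \<in> S"
      using g[OF \<open>r < k\<close>] block_subset_lessThan[OF \<open>r < k\<close> \<open>k * m \<le> N\<close>] by auto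
  qed
  ultimately show ?thesis
    using card_inj_on_le[of g "{..<k}"] by simp
qed

lemma measure_PiM_some_block_misses:
  fixes D :: "'b measure"
  assumes D: "prob_space D" and J: "J \<in> sets D" and "k * m \<le> N"
  defines "miss r \<equiv> {\<omega> \<in> space (PiM {..<N} (\<lambda>_. D)). \<forall>i\<in>{r * m..<(r + 1) * m}. \<omega> i \<in> space D - J}"
  shows "(\<Union>r<k. miss r) \<in> sets (PiM {..<N} (\<lambda>_. D))"
    and "measure (PiM {..<N} (\<lambda>_. D)) (\<Union>r<k. miss r) \<le> real k * (1 - measure D J) ^ m"
proof -
  interpret D: prob_space D by fact
  interpret P: prob_space "PiM {..<N} (\<lambda>_. D)" by (rule prob_space_PiM) (use D in auto)
  note block_sub = block_subset_lessThan[OF _ \<open>k * m \<le> N\<close>]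
  have miss_events: "miss r \<in> P.events" if "r < k" for r
    unfolding miss_def using J block_sub[OF that] by (intro sets_PiM_all_in) auto
  then show "(\<Union>r<k. miss r) \<in> P.events"
    by auto
  have miss_prob: "P.prob (miss r) = (1 - measure D J) ^ m" if "r < k" for r
  proof -
    have "P.prob (miss r) = measure D (space D - J) ^ card {r * m..<(r + 1) * m}"
      unfolding miss_def using J block_sub[OF that] by (intro measure_PiM_all_in[OF D]) auto
    then show ?thesis
      using J by (simp add: D.prob_compl)
  qed
  have "P.prob (\<Union>r<k. miss r) \<le> (\<Sum>r<k. P.prob (miss r))"
    using miss_events by (intro P.finite_measure_subadditive_finite) auto
  also have "\<dots> = real k * (1 - measure D J) ^ m"
    using miss_prob by simp
  finally show "P.prob (\<Union>r<k. miss r) \<le> real k * (1 - measure D J) ^ m" .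
qed

lemma measure_PiM_many_hits_ge:
  fixes D :: "'b measure"
  assumes D: "prob_space D" and J: "J \<in> sets D" and H: "H \<in> sets D" "measure D H = 1"
    and T: "T \<in> sets (PiM {..<N} (\<lambda>_. D))"
    and hits: "\<And>\<omega>. \<omega> \<in> space (PiM {..<N} (\<lambda>_. D)) \<Longrightarrow> \<forall>i<N. \<omega> i \<in> H \<Longrightarrow>
      k \<le> card {i. i < N \<and> \<omega> i \<in> J} \<Longrightarrow> \<omega> \<in> T"
  shows "1 - real k * (1 - measure D J) ^ (N div k) \<le> measure (PiM {..<N} (\<lambda>_. D)) T"
proof -
  let ?P = "PiM {..<N} (\<lambda>_. D)"
  interpret P: prob_space ?P by (rule prob_space_PiM) (use D in auto)
  define m where "m = N div k"
  have "k * m \<le> N"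
    by (simp add: m_def)
  define U where "U = (\<Union>r<k. {\<omega> \<in> space ?P. \<forall>i\<in>{r * m..<(r + 1) * m}. \<omega> i \<in> space D - J})"
  note U = measure_PiM_some_block_misses[OF D J \<open>k * m \<le> N\<close>, folded U_def]
  define all_H where "all_H = {\<omega> \<in> space ?P. \<forall>i\<in>{..<N}. \<omega> i \<in> H}"
  have "all_H \<in> P.events" "P.prob all_H = 1"
    unfolding all_H_def using H by (auto simp: measure_PiM_all_in[OF D])
  have "all_H - U \<subseteq> T"
  proof
    fix \<omega> assume \<omega>: "\<omega> \<in> all_H - U"
    then have "\<omega> \<in> space ?P"
      by (simp add: all_H_def)
    have "k \<le> card {i. i < N \<and> i \<in> {i. \<omega> i \<in> J}}"
    proof (rule card_ge_if_blocks_hit[OF \<open>k * m \<le> N\<close>])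
      fix r assume "r < k"
      then obtain i where i: "i \<in> {r * m..<(r + 1) * m}" "\<omega> i \<notin> space D - J"
        using \<omega> \<open>\<omega> \<in> space ?P\<close> unfolding U_def by blast
      moreover have "\<omega> i \<in> space D"
        using \<open>\<omega> \<in> space ?P\<close> i(1) block_subset_lessThan[OF \<open>r < k\<close> \<open>k * m \<le> N\<close>]
        by (auto simp: space_PiM PiE_iff)
      ultimately show "\<exists>i\<in>{r * m..<(r + 1) * m}. i \<in> {i. \<omega> i \<in> J}"
        by auto
    qed
    then show "\<omega> \<in> T"
      using hits[OF \<open>\<omega> \<in> space ?P\<close>] \<omega> by (simp add: all_H_def)
  qed
  then have "P.prob (all_H - U) \<le> P.prob T"
    by (intro P.finite_measure_mono T)
  moreover have "P.prob all_H - P.prob U \<le> P.prob (all_H - U)"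
    using \<open>all_H \<in> P.events\<close> U(1)
    by (subst P.finite_measure_Diff') (auto intro!: P.finite_measure_mono)
  ultimately show ?thesis
    using \<open>P.prob all_H = 1\<close> U(2) by (simp add: m_def)
qed

lemma measure_PiM_tendsto_1_if_many_hits:
  fixes D :: "'b measure"
  assumes D: "prob_space D" and J: "J \<in> sets D" "0 < measure D J"
    and H: "H \<in> sets D" "measure D H = 1"
    and T: "\<And>N. T N \<in> sets (PiM {..<N} (\<lambda>_. D))"
    and hits: "\<And>N \<omega>. \<omega> \<in> space (PiM {..<N} (\<lambda>_. D)) \<Longrightarrow> \<forall>i<N. \<omega> i \<in> H \<Longrightarrow>
      k \<le> card {i. i < N \<and> \<omega> i \<in> J} \<Longrightarrow> \<omega> \<in> T N"
  shows "(\<lambda>N. measure (PiM {..<N} (\<lambda>_. D)) (T N)) \<longlonglongrightarrow> 1"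
proof (rule tendsto_sandwich)
  define q where "q = 1 - measure D J"
  have "0 \<le> q" "q < 1"
    using J prob_space.prob_le_1[OF D] by (auto simp: q_def)
  show "\<forall>\<^sub>F N in sequentially. 1 - real k * q ^ (N div k) \<le> measure (PiM {..<N} (\<lambda>_. D)) (T N)"
    unfolding q_def using measure_PiM_many_hits_ge[OF D J(1) H T hits] by simp
  show "\<forall>\<^sub>F N in sequentially. measure (PiM {..<N} (\<lambda>_. D)) (T N) \<le> 1"
    using D by (auto intro!: always_eventually prob_space.prob_le_1 prob_space_PiM)
  show "(\<lambda>N. 1 - real k * q ^ (N div k)) \<longlonglongrightarrow> 1"
  proof (cases "k = 0")
    case False
    then have "(\<lambda>N. q ^ (N div k)) \<longlonglongrightarrow> 0"
      using \<open>0 \<le> q\<close> \<open>q < 1\<close>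
      by (intro filterlim_compose[OF LIMSEQ_power_zero filterlim_at_top_div_const_nat]) auto
    then show ?thesis
      using tendsto_diff[OF tendsto_const tendsto_mult[OF tendsto_const]] by fastforce
  qed simp
qed simp

lemma entropy_borel_measurable [measurable]: "entropy t w b \<in> borel_measurable borel"
  unfolding entropy_def phat1_def logit_def Let_def by measurable

(* On equations the measurable method only tries the count-space rule; this is the Borel version. *)
lemma pred_eq_real [measurable]:
  "f \<in> borel_measurable M \<Longrightarrow> g \<in> borel_measurable M \<Longrightarrow> Measurable.pred M (\<lambda>x. (f x :: real) = g x)"
  unfolding Measurable.pred_def by measurable

lemma pred_mem_memory [measurable]:
  "Measurable.pred (PiM {..<N} (\<lambda>_. data_dist \<mu>)) (\<lambda>\<omega>. (i::nat) \<in> memory t w b k N y (\<lambda>i. snd (\<omega> i)))"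
  unfolding memory_def mem_Collect_eq yhat_def logit_def by measurable

lemma sets_memory_near:
  "{\<omega> \<in> space (PiM {..<N} (\<lambda>_. data_dist \<mu>)).
     card (memory t w b k N y (\<lambda>i. snd (\<omega> i))) = k \<and>
     (\<forall>i \<in> memory t w b k N y (\<lambda>i. snd (\<omega> i)). norm (snd (\<omega> i) - m) \<le> \<rho>)}
   \<in> sets (PiM {..<N} (\<lambda>_. data_dist \<mu>))"
proof -
  have "(\<forall>i \<in> memory t w b k N y fs. P i) \<longleftrightarrow> (\<forall>i<N. i \<in> memory t w b k N y fs \<longrightarrow> P i)" for fs P
    by (auto simp: memory_def)
  then show ?thesis
    by (simp only:) measurable
qed

lemma exists_confidence_threshold:
  fixes \<mu> w :: "'a::euclidean_space"
  assumes "norm w = 1" "0 < \<mu> \<bullet> w" "- (\<mu> \<bullet> w) - 1 < b" "b < \<mu> \<bullet> w + 1" "0 < \<rho>"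
  obtains \<theta> where "0 < measure (data_dist \<mu>) (UNIV \<times> confident w b y \<theta>)"
    and "measure (data_dist \<mu>) (UNIV \<times> {f. f \<in> confident w b y \<theta> \<longrightarrow> norm (f - mstar \<mu> w y) \<le> \<rho>}) = 1"
proof
  (* Z is the maximum of the signed logit on the ball around center mu y; the bound on delta by
     2 (mu . w) keeps the cap away from the other ball, the one by Z keeps the threshold positive. *)
  define Z where "Z = \<mu> \<bullet> w + 1 + (if y then b else - b)"
  define \<delta> where "\<delta> = min (\<rho>\<^sup>2 / 2) (min (2 * (\<mu> \<bullet> w)) (Z / 2))"
  have "0 < Z"
    using assms by (simp add: Z_def)
  then have \<delta>: "0 < \<delta>" "2 * \<delta> \<le> \<rho>\<^sup>2" "\<delta> \<le> 2 * (\<mu> \<bullet> w)" "\<delta> < Z"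
    using assms by (auto simp: \<delta>_def min_less_iff_disj)
  then have cap: "confident w b y (Z - \<delta>) = {f. \<mu> \<bullet> w + 1 - \<delta> < f \<bullet> center w y}"
    by (simp add: confident_eq_halfspace Z_def algebra_simps)
  show "0 < measure (data_dist \<mu>) (UNIV \<times> confident w b y (Z - \<delta>))"
    using emeasure_cball_cap_pos[of "center w y" \<delta> "center \<mu> y"] \<delta> assms(1)
    by (intro measure_data_dist_Times_pos) (simp_all add: cap)
  show "measure (data_dist \<mu>) (UNIV \<times> {f. f \<in> confident w b y (Z - \<delta>) \<longrightarrow> norm (f - mstar \<mu> w y) \<le> \<rho>}) = 1"
    using norm_diff_mstar_le_of_mem_cap[OF assms(1) _ _ \<delta>(3,2)] assms(5)
    by (intro measure_data_dist_Times_eq_1) (auto simp: cap)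
qed

theorem lemma5:
  fixes \<mu> w :: "'a::euclidean_space" and b t \<rho> :: real and k :: nat and y :: bool
  assumes "norm w = 1" and "t > 0"
    and "\<mu> \<bullet> w > 0" and "- (\<mu> \<bullet> w) - 1 < b" and "b < \<mu> \<bullet> w + 1"
    and "\<rho> > 0"
  shows "(\<lambda>N. measure (PiM {..<N} (\<lambda>_. data_dist \<mu>))
            {\<omega> \<in> space (PiM {..<N} (\<lambda>_. data_dist \<mu>)).
               card (memory t w b k N y (\<lambda>i. snd (\<omega> i))) = k \<and>
               (\<forall>i \<in> memory t w b k N y (\<lambda>i. snd (\<omega> i)).
                  norm (snd (\<omega> i) - mstar \<mu> w y) \<le> \<rho>)})
         \<longlonglongrightarrow> 1"
proof -
  obtain \<theta> where pos: "0 < measure (data_dist \<mu>) (UNIV \<times> confident w b y \<theta>)"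
    and near: "measure (data_dist \<mu>)
      (UNIV \<times> {f. f \<in> confident w b y \<theta> \<longrightarrow> norm (f - mstar \<mu> w y) \<le> \<rho>}) = 1"
    using exists_confidence_threshold[OF assms(1,3-6)] .
  show ?thesis
  proof (rule measure_PiM_tendsto_1_if_many_hits[OF prob_space_data_dist _ pos _ near sets_memory_near])
    fix N :: nat and \<omega>
    assume "\<omega> \<in> space (PiM {..<N} (\<lambda>_. data_dist \<mu>))"
      and "\<forall>i<N. \<omega> i \<in> UNIV \<times> {f. f \<in> confident w b y \<theta> \<longrightarrow> norm (f - mstar \<mu> w y) \<le> \<rho>}"
      and "k \<le> card {i. i < N \<and> \<omega> i \<in> UNIV \<times> confident w b y \<theta>}"
    then show "\<omega> \<in> {\<omega> \<in> space (PiM {..<N} (\<lambda>_. data_dist \<mu>)).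
        card (memory t w b k N y (\<lambda>i. snd (\<omega> i))) = k \<and>
        (\<forall>i \<in> memory t w b k N y (\<lambda>i. snd (\<omega> i)). norm (snd (\<omega> i) - mstar \<mu> w y) \<le> \<rho>)}"
      using memory_near_if_many_confident[OF assms(2), where fs="\<lambda>i. snd (\<omega> i)" and N=N and k=k
          and \<theta>=\<theta> and m="mstar \<mu> w y" and \<rho>=\<rho>]
      by (simp add: mem_Times_iff)
  qed (simp_all add: sets_data_dist pair_measureI)
qed

end
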